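(* There exists a constant $C\ge1$ depending only on $\mathbf A$ such that for every $B\in\mathbf B_{\mathrm o}$ and every $A\in\mathbf S$ there exist $c>0$, $t\in\mathbb R$ and $M\in\mathbf B_{\mathrm o}$ whose rows span $A^*V_B$ such that $\varphi_{BA}(x)=c\,\varphi_M(x)+t$ for all $x\in\mathbb R^2_{>0}$, and $$C^{-1}\frac{\|A^*u_{A,B}\|}{\|A^*r_{B,2}\|}\le c\le C\frac{\|A^*u_{A,B}\|}{\|A^*r_{B,2}\|}.$$
   Context: $\mathbf A\subset\mathrm{SL}(3,\mathbb R)_{>0}$ is finite (determinant one, positive entries) and $\mathbf S$ is the semigroup it generates. For $M\in\mathrm{Mat}_{2,3}(\mathbb R)$ with rows $r_{M,1},r_{M,2}$ and $x\in\mathbb R^2$, $\tilde x=(x_1,x_2,1)$ and $\varphi_M(x)=\langle r_{M,1},\tilde x\rangle/\langle r_{M,2},\tilde x\rangle$. $\mathbf B_{\mathrm o}$ is the set of $2\times3$ real matrices with orthonormal rows whose second row has nonnegative coordinates; $V_B$ is the row span of $B$. $A^*$ is the transpose. $u_{A,B}$ is the unique (up to sign) unit vector in $V_B$ with $A^*u_{A,B}\perp A^*r_{B,2}$. *)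

theory Defs
  imports "HOL-Analysis.Analysis"
begin

text \<open>3x3 real matrices are real^3^3; 2x3 real matrices are real^3^2 (row i is M $ i).\<close>

definition SL3pos :: "(real^3^3) set" where
  "SL3pos = {A. det A = 1 \<and> (\<forall>i j. A $ i $ j > 0)}"

inductive_set gen_semigroup :: "(real^3^3) set \<Rightarrow> (real^3^3) set" for G where
  gen: "A \<in> G \<Longrightarrow> A \<in> gen_semigroup G"
| mult: "A \<in> gen_semigroup G \<Longrightarrow> A' \<in> gen_semigroup G \<Longrightarrow> A ** A' \<in> gen_semigroup G"

definition tilde :: "real^2 \<Rightarrow> real^3" where
  "tilde x = vector [x $ 1, x $ 2, 1]"

definition phi :: "real^3^2 \<Rightarrow> real^2 \<Rightarrow> real" where
  "phi M x = ((M $ 1) \<bullet> tilde x) / ((M $ 2) \<bullet> tilde x)"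

definition Bo :: "(real^3^2) set" where
  "Bo = {B. norm (B $ 1) = 1 \<and> norm (B $ 2) = 1 \<and> (B $ 1) \<bullet> (B $ 2) = 0
            \<and> (\<forall>j. B $ 2 $ j \<ge> 0)}"

definition VB :: "real^3^2 \<Rightarrow> (real^3) set" where
  "VB B = span {B $ 1, B $ 2}"

text \<open>u_{A,B}: a unit vector in V_B with A^* u orthogonal to A^* r_{B,2} (unique up to sign).\<close>
definition uAB :: "real^3^3 \<Rightarrow> real^3^2 \<Rightarrow> real^3" where
  "uAB A B = (SOME u. u \<in> VB B \<and> norm u = 1 \<and>
                 (transpose A *v u) \<bullet> (transpose A *v (B $ 2)) = 0)"

end

theory Submission
  imports Defs
begin

text \<open>Put v = A^* r_{B,1} and w = A^* r_{B,2}, so that phi_{BA}(x) = <v, x~> / <w, x~>.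
  Splitting v = p + R w with p orthogonal to w gives phi_{BA} = c phi_M + R, where M has the
  rows p/|p| and w/|w| and c = |p|/|w|. As A^* u_{A,B} is orthogonal to w, it equals a p with
  a^2 (1 + R^2) = 1, so |A^* u_{A,B}| / |w| = |a| c lies between c/(1 + |R|) and c. It remains
  to bound |v|/|w| >= |R| uniformly in A and B. If the entries of every generator agree up to
  a factor rho, those of every A in S agree up to rho^2, since row ratios are inherited from
  the left factor of a product and column ratios from the right one. As r_{B,2} is a
  nonnegative unit vector, every coordinate of w is at least the least entry of A, while |v|
  is at most nine times the largest one.\<close>

definition proj_coeff :: "'a::real_inner \<Rightarrow> 'a \<Rightarrow> real" where
  "proj_coeff v w = (v \<bullet> w) / (w \<bullet> w)"

definition proj_residual :: "'a::real_inner \<Rightarrow> 'a \<Rightarrow> 'a" where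
  "proj_residual v w = v - proj_coeff v w *\<^sub>R w"

text \<open>The Gram--Schmidt frame of \<open>(v, w)\<close> keeps the direction of \<open>w\<close>, so the second row
  stays nonnegative and the denominator of \<open>phi\<close> only changes by the factor \<open>|w|\<close>.\<close>

definition orth_frame :: "real^3 \<Rightarrow> real^3 \<Rightarrow> real^3^2" where
  "orth_frame v w = vector [sgn (proj_residual v w), sgn w]"

lemma Bo_orthonormal:
  assumes "B \<in> Bo"
  shows "B $ 1 \<bullet> B $ 1 = 1" "B $ 2 \<bullet> B $ 2 = 1" "B $ 1 \<bullet> B $ 2 = 0" "B $ 2 \<bullet> B $ 1 = 0"
  using assms by (simp_all add: Bo_def norm_eq_1 inner_commute)

lemma inner_proj_residual: "proj_residual v w \<bullet> w = 0"
  by (cases "w = 0") (simp_all add: proj_residual_def proj_coeff_def inner_diff_left)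

lemma proj_residual_eq_0_iff: "proj_residual v w = 0 \<longleftrightarrow> (\<exists>r. v = r *\<^sub>R w)"
proof
  assume "\<exists>r. v = r *\<^sub>R w"
  then obtain r where "v = r *\<^sub>R w" by blast
  then show "proj_residual v w = 0"
    by (cases "w = 0") (simp_all add: proj_residual_def proj_coeff_def)
qed (auto simp: proj_residual_def)

lemma abs_proj_coeff_le: "\<bar>proj_coeff v w\<bar> \<le> norm v / norm w"
proof (cases "w = 0")
  case False
  have "\<bar>proj_coeff v w\<bar> = \<bar>v \<bullet> w\<bar> / (norm w)\<^sup>2"
    by (simp add: proj_coeff_def abs_divide power2_norm_eq_inner)
  also have "\<dots> \<le> norm v * norm w / (norm w)\<^sup>2"
    by (simp add: Cauchy_Schwarz_ineq2 divide_right_mono)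
  also have "\<dots> = norm v / norm w"
    using False by (simp add: power2_eq_square)
  finally show ?thesis .
qed (simp add: proj_coeff_def)

lemma span_insert_sgn:
  fixes x :: "'a::real_normed_vector"
  shows "span (insert (sgn x) S) = span (insert x S)"
proof -
  have "sgn x \<in> span (insert x S)"
    unfolding sgn_div_norm by (intro span_scale span_base) simp
  moreover have "x \<in> span (insert (sgn x) S)"
  proof (cases "x = 0")
    case False
    then have "x = norm x *\<^sub>R sgn x" by (simp add: sgn_div_norm)
    then show ?thesis by (metis span_scale span_base insertI1)
  qed (simp add: span_zero)
  ultimately show ?thesis
    by (auto simp: span_eq intro: span_base)
qed

lemma span_orth_frame: "span {orth_frame v w $ 1, orth_frame v w $ 2} = span {v, w}"
proof -
  let ?p = "proj_residual v w"
  have "span {orth_frame v w $ 1, orth_frame v w $ 2} = span {?p, sgn w}"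
    by (simp add: orth_frame_def span_insert_sgn)
  also have "\<dots> = span {sgn w, ?p}" by (simp add: insert_commute)
  also have "\<dots> = span {w, ?p}" by (rule span_insert_sgn)
  also have "\<dots> = span {v, w}"
  proof -
    have "v = ?p + proj_coeff v w *\<^sub>R w" by (simp add: proj_residual_def)
    then have "v \<in> span {w, ?p}" by (metis span_add span_scale span_base insertI1 insertI2)
    then show ?thesis by (simp add: span_eq span_base span_diff span_scale proj_residual_def)
  qed
  finally show ?thesis .
qed

lemma orth_frame_in_Bo:
  assumes "w \<noteq> 0" "\<forall>j. 0 \<le> w $ j" "proj_residual v w \<noteq> 0"
  shows "orth_frame v w \<in> Bo"
proof -
  have "sgn (proj_residual v w) \<bullet> sgn w = 0"
    using inner_proj_residual[of v w] by (simp add: sgn_div_norm)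
  moreover have "0 \<le> sgn w $ j" for j
    using assms(2) by (simp add: sgn_div_norm)
  ultimately show ?thesis
    using assms by (simp add: Bo_def orth_frame_def norm_sgn)
qed

lemma phi_orth_frame:
  fixes N :: "real^3^2"
  assumes "N $ 2 \<bullet> tilde x \<noteq> 0"
  shows "phi N x = norm (proj_residual (N $ 1) (N $ 2)) / norm (N $ 2)
                     * phi (orth_frame (N $ 1) (N $ 2)) x + proj_coeff (N $ 1) (N $ 2)"
proof -
  define v w where "v = N $ 1" and "w = N $ 2"
  define p where "p = proj_residual v w"
  have w: "w \<noteq> 0" "w \<bullet> tilde x \<noteq> 0" using assms by (auto simp: w_def)
  have "phi N x = v \<bullet> tilde x / (w \<bullet> tilde x)" by (simp add: phi_def v_def w_def)
  also have "\<dots> = p \<bullet> tilde x / (w \<bullet> tilde x) + proj_coeff v w"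
    using w by (simp add: p_def proj_residual_def inner_diff_left field_simps)
  also have "p \<bullet> tilde x / (w \<bullet> tilde x) = norm p / norm w * phi (orth_frame v w) x"
    using w by (cases "p = 0") (simp_all add: phi_def orth_frame_def p_def sgn_div_norm field_simps)
  finally show ?thesis by (simp add: v_def w_def p_def)
qed

lemma norm_image_perp_image_bounds:
  fixes f :: "'a::real_inner \<Rightarrow> 'b::real_inner"
  assumes f: "linear f" and r: "r1 \<bullet> r1 = 1" "r2 \<bullet> r2 = 1" "r1 \<bullet> r2 = 0"
    and w: "f r2 \<noteq> 0"
    and u: "u \<in> span {r1, r2}" "norm u = 1" "f u \<bullet> f r2 = 0"
  shows "norm (f u) \<le> norm (proj_residual (f r1) (f r2))"
    and "norm (proj_residual (f r1) (f r2)) \<le> (1 + \<bar>proj_coeff (f r1) (f r2)\<bar>) * norm (f u)"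
proof -
  define v w where "v = f r1" and "w = f r2"
  define R where "R = proj_coeff v w"
  txt \<open>Orthogonality to \<open>w\<close> forces \<open>u = a r1 - a R r2\<close>, hence \<open>f u = a (v - R w)\<close> and
    \<open>a\<^sup>2 (1 + R\<^sup>2) = 1\<close>.\<close>
  obtain a b where uab: "u = a *\<^sub>R r1 + b *\<^sub>R r2"
    using u(1) by (auto simp: span_breakdown_eq span_singleton algebra_simps)
  have "u \<bullet> u = 1" using u(2) by (simp add: norm_eq_sqrt_inner)
  then have ab: "a\<^sup>2 + b\<^sup>2 = 1"
    using r by (simp add: uab inner_add_left inner_add_right inner_commute power2_eq_square)
  have fu: "f u = a *\<^sub>R v + b *\<^sub>R w"
    by (simp add: uab linear_add[OF f] linear_scale[OF f] v_def w_def)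
  have "w \<bullet> w \<noteq> 0" using w by (simp add: w_def)
  moreover have "a * (v \<bullet> w) + b * (w \<bullet> w) = 0"
    using u(3) by (simp add: fu inner_add_left w_def)
  ultimately have b: "b = - a * R"
    by (simp add: R_def proj_coeff_def field_simps)
  have "f u = a *\<^sub>R proj_residual v w"
    by (simp add: fu b R_def proj_residual_def algebra_simps)
  then have norm_fu: "norm (f u) = \<bar>a\<bar> * norm (proj_residual v w)" by simp
  have "a\<^sup>2 \<le> 1" using ab zero_le_power2[of b] by linarith
  then have "\<bar>a\<bar> \<le> 1" by (simp add: abs_square_le_1)
  then show "norm (f u) \<le> norm (proj_residual (f r1) (f r2))"
    by (simp add: norm_fu mult_left_le_one_le flip: v_def w_def)
  have "1 = a\<^sup>2 * (1 + R\<^sup>2)" using ab by (simp add: b power2_eq_square algebra_simps)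
  also have "\<dots> \<le> (\<bar>a\<bar> * (1 + \<bar>R\<bar>))\<^sup>2"
    by (simp add: power2_eq_square algebra_simps) (metis mult.assoc mult_nonneg_nonneg zero_le_square abs_ge_zero)
  finally have "1\<^sup>2 \<le> (\<bar>a\<bar> * (1 + \<bar>R\<bar>))\<^sup>2" by (simp only: one_power2)
  then have "1 \<le> \<bar>a\<bar> * (1 + \<bar>R\<bar>)"
    by (rule power2_le_imp_le) simp
  then show "norm (proj_residual (f r1) (f r2)) \<le> (1 + \<bar>proj_coeff (f r1) (f r2)\<bar>) * norm (f u)"
    using mult_right_mono[of 1 "\<bar>a\<bar> * (1 + \<bar>R\<bar>)" "norm (proj_residual v w)"]
    by (simp add: norm_fu R_def v_def w_def mult_ac)
qed

lemma uAB_spec: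
  assumes "B \<in> Bo"
  shows "uAB A B \<in> VB B" "norm (uAB A B) = 1"
    and "(transpose A *v uAB A B) \<bullet> (transpose A *v (B $ 2)) = 0"
proof -
  define f where "f = (\<lambda>x. transpose A *v x)"
  have f: "linear f" unfolding f_def by (rule matrix_vector_mul_linear)
  define z where "z = B $ 1 - proj_coeff (f (B $ 1)) (f (B $ 2)) *\<^sub>R B $ 2"
  have "z \<bullet> B $ 1 = 1"
    using Bo_orthonormal[OF assms] by (simp add: z_def inner_diff_left)
  then have "z \<noteq> 0" by auto
  have "f z = proj_residual (f (B $ 1)) (f (B $ 2))"
    by (simp add: z_def proj_residual_def linear_diff[OF f] linear_scale[OF f])
  then have "f (sgn z) \<bullet> f (B $ 2) = 0"
    by (simp add: sgn_div_norm linear_scale[OF f] inner_proj_residual)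
  moreover have "sgn z \<in> VB B"
    by (simp add: VB_def z_def sgn_div_norm span_base span_diff span_scale)
  ultimately have "\<exists>u. u \<in> VB B \<and> norm u = 1 \<and> f u \<bullet> f (B $ 2) = 0"
    using \<open>z \<noteq> 0\<close> by (intro exI[of _ "sgn z"]) (simp add: norm_sgn)
  then have "uAB A B \<in> VB B \<and> norm (uAB A B) = 1 \<and> f (uAB A B) \<bullet> f (B $ 2) = 0"
    unfolding uAB_def f_def by (rule someI_ex)
  then show "uAB A B \<in> VB B" "norm (uAB A B) = 1"
    and "(transpose A *v uAB A B) \<bullet> (transpose A *v (B $ 2)) = 0"
    by (simp_all add: f_def)
qed

lemma norm_transpose_uAB_bounds:
  fixes A :: "real^3^3"
  assumes B: "B \<in> Bo" and w: "transpose A *v B $ 2 \<noteq> 0"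
  defines "v \<equiv> transpose A *v B $ 1" and "w \<equiv> transpose A *v B $ 2"
  shows "norm (transpose A *v uAB A B) \<le> norm (proj_residual v w)"
    and "norm (proj_residual v w) \<le> (1 + \<bar>proj_coeff v w\<bar>) * norm (transpose A *v uAB A B)"
  using norm_image_perp_image_bounds[OF matrix_vector_mul_linear Bo_orthonormal(1-3)[OF B] w,
      of "uAB A B"] uAB_spec[OF B, of A]
  by (simp_all add: v_def w_def VB_def del: transpose_matrix_vector)

lemma matrix_matrix_mult_row: "(B ** A) $ i = transpose A *v (B $ i)"
  for A :: "'a::comm_semiring_1^'k^'n" and B :: "'a^'n^'m"
  by (simp add: vec_eq_iff matrix_matrix_mult_def vector_matrix_mult_def mult.commute)

lemma norm_transpose_mult_le:
  fixes A :: "real^'n^'m"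
  assumes "\<forall>i j. \<bar>A $ i $ j\<bar> \<le> b"
  shows "norm (transpose A *v r) \<le> real (CARD('m) * CARD('n)) * b * norm r"
proof -
  have "0 \<le> b" using assms by (meson abs_ge_zero order_trans)
  have "\<bar>(transpose A *v r) $ j\<bar> \<le> real CARD('m) * b * norm r" for j
  proof -
    have "\<bar>(transpose A *v r) $ j\<bar> = \<bar>\<Sum>i\<in>UNIV. A $ i $ j * r $ i\<bar>"
      by (simp add: vector_matrix_mult_def mult.commute)
    also have "\<dots> \<le> (\<Sum>i\<in>UNIV. \<bar>A $ i $ j\<bar> * \<bar>r $ i\<bar>)"
      unfolding abs_mult[symmetric] by (rule sum_abs)
    also have "\<dots> \<le> (\<Sum>i\<in>(UNIV::'m set). b * norm r)"
      using assms \<open>0 \<le> b\<close> by (intro sum_mono mult_mono) (auto simp: component_le_norm_cart)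
    finally show ?thesis by simp
  qed
  then have "(\<Sum>j\<in>UNIV. \<bar>(transpose A *v r) $ j\<bar>) \<le> (\<Sum>j\<in>(UNIV::'n set). real CARD('m) * b * norm r)"
    by (intro sum_mono)
  then show ?thesis
    using norm_le_l1_cart[of "transpose A *v r"] by (simp add: mult_ac)
qed

lemma transpose_mult_nonneg_ge:
  fixes A :: "real^'n^'m"
  assumes "\<forall>i. a \<le> A $ i $ j" "0 \<le> a" "\<forall>i. 0 \<le> r $ i"
  shows "a * norm r \<le> (transpose A *v r) $ j"
proof -
  have "a * norm r \<le> a * (\<Sum>i\<in>UNIV. r $ i)"
    using norm_le_l1_cart[of r] assms(2,3) by (simp add: mult_left_mono)
  also have "\<dots> \<le> (\<Sum>i\<in>UNIV. A $ i $ j * r $ i)"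
    unfolding sum_distrib_left using assms by (intro sum_mono mult_right_mono) auto
  finally show ?thesis by (simp add: vector_matrix_mult_def mult.commute)
qed

lemma inner_tilde_pos:
  assumes "\<forall>j. 0 < w $ j" "0 < x $ 1" "0 < x $ 2"
  shows "0 < w \<bullet> tilde x"
  using assms by (simp add: tilde_def inner_vec_def sum_3 add_pos_pos)

lemma transpose_mult_Bo_row2_ge:
  fixes A :: "real^'n^3"
  assumes "B \<in> Bo" "0 \<le> a" "\<forall>i j. a \<le> A $ i $ j"
  shows "a \<le> (transpose A *v B $ 2) $ j"
  using transpose_mult_nonneg_ge[of a A j "B $ 2"] assms by (simp add: Bo_def)

lemma proj_residual_image_Bo_nonzero:
  fixes A :: "real^3^3"
  assumes "B \<in> Bo" "det A \<noteq> 0"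
  shows "proj_residual (transpose A *v B $ 1) (transpose A *v B $ 2) \<noteq> 0"
proof
  assume "proj_residual (transpose A *v B $ 1) (transpose A *v B $ 2) = 0"
  then obtain r where "transpose A *v B $ 1 = r *\<^sub>R (transpose A *v B $ 2)"
    by (auto simp: proj_residual_eq_0_iff)
  then have eq: "transpose A *v (B $ 1 - r *\<^sub>R B $ 2) = transpose A *v 0"
    by (simp add: matrix_vector_mult_diff_distrib matrix_vector_mult_scaleR del: transpose_matrix_vector)
  have "inj ((*v) (transpose A))"
    using assms(2) by (intro inj_matrix_vector_mult) (simp add: invertible_det_nz det_transpose)
  then have "B $ 1 - r *\<^sub>R B $ 2 = 0" using eq by (rule injD)
  then have "B $ 1 \<bullet> B $ 1 = r * (B $ 2 \<bullet> B $ 1)" by simp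
  then show False using Bo_orthonormal[OF assms(1)] by simp
qed

lemma proj_coeff_image_Bo_le:
  fixes A :: "real^3^3"
  assumes "B \<in> Bo" "0 < a" "\<forall>i j. a \<le> A $ i $ j \<and> A $ i $ j \<le> K * a"
  shows "\<bar>proj_coeff (transpose A *v B $ 1) (transpose A *v B $ 2)\<bar> \<le> 9 * K"
proof -
  have "norm (transpose A *v B $ 1) \<le> real (CARD(3) * CARD(3)) * (K * a) * norm (B $ 1)"
    using assms by (intro norm_transpose_mult_le) (metis abs_of_pos less_le_trans)
  then have v: "norm (transpose A *v B $ 1) \<le> 9 * K * a"
    using assms(1) by (simp add: Bo_def)
  have "a \<le> (transpose A *v B $ 2) $ 1"
    using assms by (intro transpose_mult_Bo_row2_ge) auto
  then have w: "a \<le> norm (transpose A *v B $ 2)"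
    using component_le_norm_cart[of "transpose A *v B $ 2" 1] by simp
  have "\<bar>proj_coeff (transpose A *v B $ 1) (transpose A *v B $ 2)\<bar>
      \<le> norm (transpose A *v B $ 1) / norm (transpose A *v B $ 2)"
    by (rule abs_proj_coeff_le)
  also have "\<dots> \<le> 9 * K * a / a"
    using v w assms(2) order_trans[OF norm_ge_zero v] by (intro frac_le) auto
  finally show ?thesis using assms(2) by simp
qed

lemma phi_normal_form:
  fixes A :: "real^3^3" and B :: "real^3^2"
  assumes B: "B \<in> Bo" and det: "det A \<noteq> 0"
    and row2_pos: "\<forall>j. 0 < (transpose A *v B $ 2) $ j"
    and C: "1 + \<bar>proj_coeff (transpose A *v B $ 1) (transpose A *v B $ 2)\<bar> \<le> C"
  shows "\<exists>c t. \<exists>M \<in> Bo. c > 0 \<and>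
         span {M $ 1, M $ 2} = (\<lambda>v. transpose A *v v) ` VB B \<and>
         (\<forall>x::real^2. x $ 1 > 0 \<and> x $ 2 > 0 \<longrightarrow> phi (B ** A) x = c * phi M x + t) \<and>
         (1 / C) * (norm (transpose A *v uAB A B) / norm (transpose A *v (B $ 2))) \<le> c \<and>
         c \<le> C * (norm (transpose A *v uAB A B) / norm (transpose A *v (B $ 2)))"
proof -
  define f where "f = (\<lambda>x. transpose A *v x)"
  define v w where "v = f (B $ 1)" and "w = f (B $ 2)"
  define c where "c = norm (proj_residual v w) / norm w"
  define ratio where "ratio = norm (f (uAB A B)) / norm w"
  have lin: "linear f" unfolding f_def by (rule matrix_vector_mul_linear)
  have w_pos: "0 < w $ j" for j using row2_pos by (simp add: w_def f_def)
  then have "w \<noteq> 0" by (metis zero_index less_irrefl)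
  have p: "proj_residual v w \<noteq> 0"
    using proj_residual_image_Bo_nonzero[OF B det] by (simp add: v_def w_def f_def)
  have "orth_frame v w \<in> Bo"
    using \<open>w \<noteq> 0\<close> w_pos p by (intro orth_frame_in_Bo) (auto simp: less_imp_le)
  moreover have "c > 0" using \<open>w \<noteq> 0\<close> p by (simp add: c_def)
  moreover have "span {orth_frame v w $ 1, orth_frame v w $ 2} = f ` VB B"
    unfolding span_orth_frame VB_def span_linear_image[OF lin, symmetric] by (simp add: v_def w_def)
  moreover have "phi (B ** A) x = c * phi (orth_frame v w) x + proj_coeff v w"
    if "0 < x $ 1" "0 < x $ 2" for x
  proof -
    have rows: "(B ** A) $ 1 = v" "(B ** A) $ 2 = w"
      by (simp_all add: matrix_matrix_mult_row v_def w_def f_def del: transpose_matrix_vector)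
    have "0 < w \<bullet> tilde x" using w_pos that by (intro inner_tilde_pos) auto
    then show ?thesis using phi_orth_frame[of "B ** A" x] by (simp add: rows c_def)
  qed
  moreover have "ratio \<le> c" "c \<le> C * ratio"
  proof -
    have fu_le: "norm (f (uAB A B)) \<le> norm (proj_residual v w)"
      and p_le: "norm (proj_residual v w) \<le> (1 + \<bar>proj_coeff v w\<bar>) * norm (f (uAB A B))"
      using norm_transpose_uAB_bounds[OF B] \<open>w \<noteq> 0\<close> by (simp_all add: v_def w_def f_def)
    have "norm (proj_residual v w) \<le> C * norm (f (uAB A B))"
      using p_le C by (simp add: v_def w_def f_def) (meson mult_right_mono norm_ge_zero order_trans)
    then have "c \<le> C * norm (f (uAB A B)) / norm w"
      unfolding c_def by (rule divide_right_mono) simp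
    then show "c \<le> C * ratio" by (simp add: ratio_def)
    show "ratio \<le> c"
      using fu_le by (simp add: c_def ratio_def divide_right_mono)
  qed
  moreover have "(1 / C) * ratio \<le> ratio"
    using C by (intro mult_left_le_one_le) (simp_all add: ratio_def)
  ultimately show ?thesis
    unfolding f_def[symmetric] w_def[symmetric] ratio_def[symmetric]
    by (intro exI[of _ c] exI[of _ "proj_coeff v w"] bexI[of _ "orth_frame v w"]) auto
qed

lemma SL3pos_mult:
  assumes "A \<in> SL3pos" "A' \<in> SL3pos"
  shows "A ** A' \<in> SL3pos"
proof -
  have "det (A ** A') = 1" using assms by (simp add: SL3pos_def det_mul)
  moreover have "0 < (A ** A') $ i $ j" for i j
    using assms by (auto simp: SL3pos_def matrix_matrix_mult_def intro!: sum_pos)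
  ultimately show ?thesis by (simp add: SL3pos_def)
qed

lemma gen_semigroup_SL3pos:
  assumes "As \<subseteq> SL3pos"
  shows "gen_semigroup As \<subseteq> SL3pos"
proof
  fix A assume "A \<in> gen_semigroup As"
  then show "A \<in> SL3pos"
    by (induction rule: gen_semigroup.induct) (use assms SL3pos_mult in auto)
qed

lemma matrix_mult_row_ratio_le:
  fixes G :: "real^'n^'m" and X :: "real^'k^'n"
  assumes "\<forall>p. G $ i $ p \<le> \<rho> * G $ k $ p" "\<forall>p j. 0 \<le> X $ p $ j"
  shows "(G ** X) $ i $ j \<le> \<rho> * (G ** X) $ k $ j"
proof -
  have "(G ** X) $ i $ j \<le> (\<Sum>p\<in>UNIV. \<rho> * G $ k $ p * X $ p $ j)"
    unfolding matrix_matrix_mult_def using assms by (auto intro!: sum_mono mult_right_mono)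
  then show ?thesis by (simp add: matrix_matrix_mult_def sum_distrib_left mult.assoc)
qed

lemma matrix_mult_column_ratio_le:
  fixes Y :: "real^'n^'m" and H :: "real^'k^'n"
  assumes "\<forall>p. H $ p $ j \<le> \<rho> * H $ p $ l" "\<forall>p. 0 \<le> Y $ k $ p"
  shows "(Y ** H) $ k $ j \<le> \<rho> * (Y ** H) $ k $ l"
proof -
  have "(Y ** H) $ k $ j \<le> (\<Sum>p\<in>UNIV. Y $ k $ p * (\<rho> * H $ p $ l))"
    unfolding matrix_matrix_mult_def using assms by (auto intro!: sum_mono mult_left_mono)
  then show ?thesis by (simp add: matrix_matrix_mult_def sum_distrib_left mult_ac)
qed

lemma gen_semigroup_entry_ratio:
  assumes "As \<subseteq> SL3pos" "0 \<le> \<rho>" "\<forall>G\<in>As. \<forall>i j k l. G $ i $ j \<le> \<rho> * G $ k $ l"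
    and "A \<in> gen_semigroup As"
  shows "A $ i $ j \<le> \<rho>\<^sup>2 * A $ k $ l"
proof -
  have "(\<forall>i k j. A $ i $ j \<le> \<rho> * A $ k $ j) \<and> (\<forall>k j l. A $ k $ j \<le> \<rho> * A $ k $ l)"
    using assms(4)
  proof (induction rule: gen_semigroup.induct)
    case (gen A)
    then show ?case using assms(3) by blast
  next
    case (mult A A')
    have "A \<in> SL3pos" "A' \<in> SL3pos"
      using mult.hyps gen_semigroup_SL3pos[OF assms(1)] by auto
    then have "\<forall>p j. 0 \<le> A $ p $ j" "\<forall>p j. 0 \<le> A' $ p $ j"
      by (auto simp: SL3pos_def less_imp_le)
    then show ?case
      using mult.IH by (auto intro!: matrix_mult_row_ratio_le matrix_mult_column_ratio_le)
  qed
  then have "A $ i $ j \<le> \<rho> * A $ k $ j" "A $ k $ j \<le> \<rho> * A $ k $ l" by blast+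
  then have "A $ i $ j \<le> \<rho> * (\<rho> * A $ k $ l)"
    using assms(2) by (meson mult_left_mono order_trans)
  then show ?thesis by (simp add: power2_eq_square mult.assoc)
qed

lemma finite_positive_entry_ratio:
  fixes As :: "(real^'n^'m) set"
  assumes "finite As" "\<forall>G\<in>As. \<forall>i j. 0 < G $ i $ j"
  shows "\<exists>\<rho>\<ge>1. \<forall>G\<in>As. \<forall>i j k l. G $ i $ j \<le> \<rho> * G $ k $ l"
proof -
  define ratios where
    "ratios = (\<lambda>(G, i, j, k, l). G $ i $ j / G $ k $ l) ` (As \<times> UNIV \<times> UNIV \<times> UNIV \<times> UNIV)"
  have fin: "finite (insert 1 ratios)" using assms(1) by (simp add: ratios_def)
  have "G $ i $ j \<le> Max (insert 1 ratios) * G $ k $ l" if "G \<in> As" for G i j k l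
  proof -
    have "G $ i $ j / G $ k $ l \<in> ratios"
      unfolding ratios_def using that by (intro image_eqI[of _ _ "(G, i, j, k, l)"]) auto
    then have "G $ i $ j / G $ k $ l \<le> Max (insert 1 ratios)"
      using fin by (intro Max_ge) auto
    then show ?thesis using assms(2) that by (simp add: divide_le_eq)
  qed
  moreover have "1 \<le> Max (insert 1 ratios)" using fin by simp
  ultimately show ?thesis by blast
qed

lemma min_entry_bounds:
  fixes A :: "real^'n^'m"
  assumes "\<forall>i j. 0 < A $ i $ j" "\<forall>i j k l. A $ i $ j \<le> K * A $ k $ l"
  shows "\<exists>a>0. \<forall>i j. a \<le> A $ i $ j \<and> A $ i $ j \<le> K * a"
proof -
  define a where "a = Min (range (\<lambda>(i, j). A $ i $ j))"
  have "a \<in> range (\<lambda>(i, j). A $ i $ j)" unfolding a_def by (intro Min_in) simp_all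
  then obtain k l where "a = A $ k $ l" by auto
  moreover have "a \<le> A $ i $ j" for i j unfolding a_def by (rule Min_le) auto
  ultimately show ?thesis using assms by metis
qed

lemma gen_semigroup_phi_normal_form:
  assumes As: "As \<subseteq> SL3pos" and \<rho>: "1 \<le> \<rho>" "\<forall>G\<in>As. \<forall>i j k l. G $ i $ j \<le> \<rho> * G $ k $ l"
    and B: "B \<in> Bo" and A: "A \<in> gen_semigroup As"
  shows "\<exists>c t. \<exists>M \<in> Bo. c > 0 \<and>
         span {M $ 1, M $ 2} = (\<lambda>v. transpose A *v v) ` VB B \<and>
         (\<forall>x::real^2. x $ 1 > 0 \<and> x $ 2 > 0 \<longrightarrow> phi (B ** A) x = c * phi M x + t) \<and>
         (1 / (1 + 9 * \<rho>\<^sup>2)) * (norm (transpose A *v uAB A B) / norm (transpose A *v (B $ 2))) \<le> c \<and>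
         c \<le> (1 + 9 * \<rho>\<^sup>2) * (norm (transpose A *v uAB A B) / norm (transpose A *v (B $ 2)))"
proof -
  have "A \<in> SL3pos" using A gen_semigroup_SL3pos[OF As] by auto
  then have det: "det A \<noteq> 0" and pos: "\<forall>i j. 0 < A $ i $ j" by (simp_all add: SL3pos_def)
  have "\<forall>i j k l. A $ i $ j \<le> \<rho>\<^sup>2 * A $ k $ l"
    using gen_semigroup_entry_ratio[OF As _ \<rho>(2) A] \<rho>(1) by simp
  then obtain a where a: "0 < a" and entries: "\<forall>i j. a \<le> A $ i $ j \<and> A $ i $ j \<le> \<rho>\<^sup>2 * a"
    using min_entry_bounds[OF pos] by blast
  have "\<forall>j. 0 < (transpose A *v B $ 2) $ j"
    using transpose_mult_Bo_row2_ge[OF B] a entries by (meson less_eq_real_def less_le_trans)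
  moreover have "1 + \<bar>proj_coeff (transpose A *v B $ 1) (transpose A *v B $ 2)\<bar> \<le> 1 + 9 * \<rho>\<^sup>2"
    using proj_coeff_image_Bo_le[OF B a entries] by simp
  ultimately show ?thesis by (rule phi_normal_form[OF B det])
qed

theorem lemma3p2:
  fixes As :: "(real^3^3) set"
  assumes "finite As" and "As \<subseteq> SL3pos"
  shows "\<exists>C::real. C \<ge> 1 \<and>
    (\<forall>B \<in> Bo. \<forall>A \<in> gen_semigroup As.
       \<exists>c::real. \<exists>t::real. \<exists>M \<in> Bo. c > 0 \<and>
         span {M $ 1, M $ 2} = (\<lambda>v. transpose A *v v) ` VB B \<and>
         (\<forall>x::real^2. x $ 1 > 0 \<and> x $ 2 > 0 \<longrightarrow> phi (B ** A) x = c * phi M x + t) \<and>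
         (1 / C) * (norm (transpose A *v uAB A B) / norm (transpose A *v (B $ 2))) \<le> c \<and>
         c \<le> C * (norm (transpose A *v uAB A B) / norm (transpose A *v (B $ 2))))"
proof -
  have "\<forall>G\<in>As. \<forall>i j. 0 < G $ i $ j" using assms(2) by (auto simp: SL3pos_def)
  then obtain \<rho> where \<rho>: "1 \<le> \<rho>" "\<forall>G\<in>As. \<forall>i j k l. G $ i $ j \<le> \<rho> * G $ k $ l"
    using finite_positive_entry_ratio[OF assms(1)] by blast
  show ?thesis
    by (intro exI[of _ "1 + 9 * \<rho>\<^sup>2"] conjI ballI gen_semigroup_phi_normal_form[OF assms(2) \<rho>]) simp_all
qed

end
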